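(* Let $(\mathbb{K},\oplus,\otimes,\bar 0,\bar 1)$ be a monotonic negative semiring with respect to a total order $\preceq$, and let $A=(Q,s,\Sigma,\omega,\delta)$ be an acyclic weighted finite-state acceptor over it, with backward shortest distance $\beta$ computed in $(\mathbb{K},\oplus,\otimes,\bar 0,\bar 1)$. Then for every transition $(q,z,k,r)\in\delta$ we have $\beta(q)\preceq k\otimes\beta(r)$; i.e. $\beta$ is a consistent heuristic for A* search over the companion semiring $(\mathbb{K},\widehat\oplus,\otimes,\bar 0,\bar 1)$.
   Context: A semiring $(\mathbb{K},\oplus,\otimes,\bar 0,\bar 1)$ consists of a commutative monoid $(\mathbb{K},\oplus)$ with identity $\bar 0$ and a monoid $(\mathbb{K},\otimes)$ with identity $\bar 1$, with $\otimes$ distributing over $\oplus$ on both sides and $\bar 0$ annihilating for $\otimes$. A semiring with a total order $\preceq$ on $\mathbb{K}$ is monotonic if for all $a,b,c$, $a\preceq b$ implies $a\oplus c\preceq b\oplus c$, $a\otimes c\preceq b\otimes c$, $c\otimes a\preceq c\otimes b$; it is negative if $\bar 1\preceq\bar 0$. The companion semiring is $(\mathbb{K},\widehat\oplus,\otimes,\bar 0,\bar 1)$ where $a\,\widehat\oplus\, b=a$ if $a\preceq b$ and $b$ otherwise. A weighted finite-state acceptor is a tuple $(Q,s,\Sigma,\omega,\delta)$ with $Q$ a finite set of states, $s\in Q$ initial, $\Sigma$ a finite alphabet, $\omega:Q\to\mathbb{K}$ the final weight function, and $\delta\subseteq Q\times\Sigma\times\mathbb{K}\times Q$ a finite transition relation;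 it is acyclic if there is an ordering of $Q$ with $q$ strictly before $r$ for every $(q,z,k,r)\in\delta$. Let $F=\{q:\omega(q)\neq\bar 0\}$. A path from $q_0$ to $q_n$ is a sequence of transitions $(q_{i-1},z_i,k_i,q_i)\in\delta$, $i=1,\dots,n$ ($n\ge0$). The backward shortest distance is $\beta(q)=\bigoplus_{f\in F}\bigoplus_{p\text{ path from }q\text{ to }f}(k_1\otimes\cdots\otimes k_n\otimes\omega(f))$, an empty sum being $\bar 0$. An A* heuristic $\digamma:Q\to\mathbb{K}$ is consistent if $\digamma(q)\preceq k\otimes\digamma(r)$ for every transition $(q,z,k,r)\in\delta$. *)

theory Defs
  imports Main
begin

text \<open>A semiring given by explicit operations on a carrier type 'k
  (the whole type is the carrier K).\<close>
definition is_semiring :: "('k \<Rightarrow> 'k \<Rightarrow> 'k) \<Rightarrow> ('k \<Rightarrow> 'k \<Rightarrow> 'k) \<Rightarrow> 'k \<Rightarrow> 'k \<Rightarrow> bool" where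
  "is_semiring add mul zr un \<longleftrightarrow>
     (\<forall>a b c. add (add a b) c = add a (add b c)) \<and>
     (\<forall>a b. add a b = add b a) \<and>
     (\<forall>a. add zr a = a) \<and>
     (\<forall>a b c. mul (mul a b) c = mul a (mul b c)) \<and>
     (\<forall>a. mul un a = a \<and> mul a un = a) \<and>
     (\<forall>a b c. mul a (add b c) = add (mul a b) (mul a c)) \<and>
     (\<forall>a b c. mul (add a b) c = add (mul a c) (mul b c)) \<and>
     (\<forall>a. mul zr a = zr \<and> mul a zr = zr)"

definition is_total_order :: "('k \<Rightarrow> 'k \<Rightarrow> bool) \<Rightarrow> bool" where
  "is_total_order le \<longleftrightarrow>
     (\<forall>a. le a a) \<and>
     (\<forall>a b. le a b \<and> le b a \<longrightarrow> a = b) \<and>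
     (\<forall>a b c. le a b \<and> le b c \<longrightarrow> le a c) \<and>
     (\<forall>a b. le a b \<or> le b a)"

definition monotonic_semiring ::
  "('k \<Rightarrow> 'k \<Rightarrow> bool) \<Rightarrow> ('k \<Rightarrow> 'k \<Rightarrow> 'k) \<Rightarrow> ('k \<Rightarrow> 'k \<Rightarrow> 'k) \<Rightarrow> 'k \<Rightarrow> 'k \<Rightarrow> bool" where
  "monotonic_semiring le add mul zr un \<longleftrightarrow>
     is_semiring add mul zr un \<and> is_total_order le \<and>
     (\<forall>a b c. le a b \<longrightarrow>
        le (add a c) (add b c) \<and> le (mul a c) (mul b c) \<and> le (mul c a) (mul c b))"

definition negative_semiring :: "('k \<Rightarrow> 'k \<Rightarrow> bool) \<Rightarrow> 'k \<Rightarrow> 'k \<Rightarrow> bool" where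
  "negative_semiring le zr un \<longleftrightarrow> le un zr"

definition is_wfsa :: "'q set \<Rightarrow> 'q \<Rightarrow> 'z set \<Rightarrow> ('q \<Rightarrow> 'k) \<Rightarrow> ('q \<times> 'z \<times> 'k \<times> 'q) set \<Rightarrow> bool" where
  "is_wfsa Q s Sig omega delta \<longleftrightarrow>
     finite Q \<and> s \<in> Q \<and> finite Sig \<and> finite delta \<and>
     delta \<subseteq> Q \<times> Sig \<times> UNIV \<times> Q"

definition acyclic_wfsa :: "'q set \<Rightarrow> ('q \<times> 'z \<times> 'k \<times> 'q) set \<Rightarrow> bool" where
  "acyclic_wfsa Q delta \<longleftrightarrow>
     (\<exists>rank :: 'q \<Rightarrow> nat. inj_on rank Q \<and>
        (\<forall>q z k r. (q, z, k, r) \<in> delta \<longrightarrow> rank q < rank r))"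

definition final_states :: "'q set \<Rightarrow> ('q \<Rightarrow> 'k) \<Rightarrow> 'k \<Rightarrow> 'q set" where
  "final_states Q omega zr = {q \<in> Q. omega q \<noteq> zr}"

fun is_path :: "('q \<times> 'z \<times> 'k \<times> 'q) set \<Rightarrow> 'q \<Rightarrow> ('q \<times> 'z \<times> 'k \<times> 'q) list \<Rightarrow> 'q \<Rightarrow> bool" where
  "is_path delta q [] r \<longleftrightarrow> q = r"
| "is_path delta q ((q', z, k, r') # ts) r \<longleftrightarrow>
     (q', z, k, r') \<in> delta \<and> q' = q \<and> is_path delta r' ts r"

definition path_weight :: "('k \<Rightarrow> 'k \<Rightarrow> 'k) \<Rightarrow> ('q \<times> 'z \<times> 'k \<times> 'q) list \<Rightarrow> 'k \<Rightarrow> 'k" where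
  "path_weight mul ts w = foldr (\<lambda>(_, _, k, _) acc. mul k acc) ts w"

text \<open>Finite (+)-sum over a set (empty or infinite sum is zr).\<close>
definition ssum :: "('k \<Rightarrow> 'k \<Rightarrow> 'k) \<Rightarrow> 'k \<Rightarrow> ('a \<Rightarrow> 'k) \<Rightarrow> 'a set \<Rightarrow> 'k" where
  "ssum add zr g A = (if finite A then Finite_Set.fold (\<lambda>x acc. add (g x) acc) zr A else zr)"

definition backward_distance ::
  "('k \<Rightarrow> 'k \<Rightarrow> 'k) \<Rightarrow> ('k \<Rightarrow> 'k \<Rightarrow> 'k) \<Rightarrow> 'k \<Rightarrow> 'q set \<Rightarrow> ('q \<Rightarrow> 'k)
     \<Rightarrow> ('q \<times> 'z \<times> 'k \<times> 'q) set \<Rightarrow> 'q \<Rightarrow> 'k" where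
  "backward_distance add mul zr Q omega delta q =
     ssum add zr (\<lambda>(ts, f). path_weight mul ts (omega f))
       {(ts, f). f \<in> final_states Q omega zr \<and> is_path delta q ts f}"

definition consistent_heuristic ::
  "('k \<Rightarrow> 'k \<Rightarrow> bool) \<Rightarrow> ('k \<Rightarrow> 'k \<Rightarrow> 'k) \<Rightarrow> ('q \<times> 'z \<times> 'k \<times> 'q) set \<Rightarrow> ('q \<Rightarrow> 'k) \<Rightarrow> bool" where
  "consistent_heuristic le mul delta h \<longleftrightarrow>
     (\<forall>q z k r. (q, z, k, r) \<in> delta \<longrightarrow> le (h q) (mul k (h r)))"

end

theory Submission
  imports Defs
begin

text \<open>Prefixing the transition (q,z,k,r) to every path from r to a final state is an
  injection into the paths from q, and it multiplies weights by k on the left. So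
  k \<otimes> \<beta>(r) is the sum over a subset of the summands of \<beta>(q). In a monotonic
  negative semiring every element is below 0, so adding summands can only decrease
  a sum; acyclicity makes all these sums finite.\<close>

lemma is_semiring_comm_monoid_set:
  assumes "is_semiring add mul zr un"
  shows "comm_monoid_set add zr"
  using assms unfolding is_semiring_def
  by unfold_locales (metis, metis, metis)

lemma ssum_eq_F:
  assumes "is_semiring add mul zr un"
  shows "ssum add zr g A = comm_monoid_set.F add zr g A"
  unfolding ssum_def comm_monoid_set.eq_fold[OF is_semiring_comm_monoid_set[OF assms]]
  by (simp add: comp_def)

lemma ssum_mult_left:
  assumes "is_semiring add mul zr un"
  shows "ssum add zr (\<lambda>x. mul k (g x)) A = mul k (ssum add zr g A)"
proof (cases "finite A")
  case True
  interpret S: comm_monoid_set add zr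
    using is_semiring_comm_monoid_set[OF assms] .
  have distrib: "mul k (add a b) = add (mul k a) (mul k b)" and annihil: "mul k zr = zr" for a b
    using assms unfolding is_semiring_def by auto
  from True have "S.F (\<lambda>x. mul k (g x)) A = mul k (S.F g A)"
    by (induction A rule: finite_induct) (simp_all add: distrib annihil)
  then show ?thesis
    by (simp only: ssum_eq_F[OF assms])
next
  case False
  then show ?thesis
    using assms unfolding ssum_def is_semiring_def by simp
qed

lemma ssum_reindex:
  assumes "is_semiring add mul zr un" and "inj_on h A"
  shows "ssum add zr g (h ` A) = ssum add zr (g \<circ> h) A"
  using comm_monoid_set.reindex[OF is_semiring_comm_monoid_set[OF assms(1)] assms(2)]
  by (simp add: ssum_eq_F[OF assms(1)])

lemma monotonic_negative_le_zero:
  assumes "monotonic_semiring le add mul zr un" and "negative_semiring le zr un"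
  shows "le a zr"
proof -
  have "le (mul un a) (mul zr a)"
    using assms unfolding monotonic_semiring_def negative_semiring_def by blast
  then show ?thesis
    using assms(1) unfolding monotonic_semiring_def is_semiring_def by simp
qed

lemma monotonic_negative_add_le:
  assumes "monotonic_semiring le add mul zr un" and "negative_semiring le zr un"
  shows "le (add a b) a"
proof -
  have "le (add b a) (add zr a)"
    using assms(1) monotonic_negative_le_zero[OF assms] unfolding monotonic_semiring_def by blast
  then show ?thesis
    using assms(1) unfolding monotonic_semiring_def is_semiring_def by metis
qed

lemma ssum_superset_le:
  assumes "monotonic_semiring le add mul zr un" and "negative_semiring le zr un"
    and "B \<subseteq> A" and "finite A"
  shows "le (ssum add zr g A) (ssum add zr g B)"
proof -
  have sr: "is_semiring add mul zr un"
    using assms(1) unfolding monotonic_semiring_def by blast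
  interpret S: comm_monoid_set add zr
    using is_semiring_comm_monoid_set[OF sr] .
  have "S.F g A = add (S.F g B) (S.F g (A - B))"
    using S.subset_diff[OF assms(3,4)] sr unfolding is_semiring_def by metis
  then show ?thesis
    using monotonic_negative_add_le[OF assms(1,2)] by (simp add: ssum_eq_F[OF sr])
qed

lemma is_path_ranked:
  assumes "\<forall>q z k r. (q, z, k, r) \<in> delta \<longrightarrow> rank q < (rank r :: nat)"
    and "is_path delta q ts f"
  shows "set ts \<subseteq> delta \<and> distinct ts \<and> (\<forall>t\<in>set ts. rank q \<le> rank (fst t))"
  using assms(2)
proof (induction ts arbitrary: q)
  case Nil
  then show ?case by simp
next
  case (Cons t ts)
  obtain z k r where t: "t = (q, z, k, r)" and tr: "t \<in> delta" and p: "is_path delta r ts f"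
    using Cons.prems by (cases t) auto
  have lt: "rank q < rank r"
    using assms(1) t tr by blast
  have ih: "set ts \<subseteq> delta \<and> distinct ts \<and> (\<forall>t\<in>set ts. rank r \<le> rank (fst t))"
    using Cons.IH[OF p] .
  then have "t \<notin> set ts"
    using lt t by fastforce
  then show ?case
    using ih tr t lt by fastforce
qed

text \<open>Paths of an acyclic automaton never repeat a transition.\<close>

lemma finite_paths_acyclic:
  fixes delta :: "('q \<times> 'z \<times> 'k \<times> 'q) set"
  assumes "acyclic_wfsa Q delta" and "finite delta" and "finite F"
  shows "finite {(ts, f). f \<in> F \<and> is_path delta q ts f}"
proof (rule finite_subset)
  obtain rank :: "'q \<Rightarrow> nat" where rank: "\<forall>q z k r. (q, z, k, r) \<in> delta \<longrightarrow> rank q < rank r"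
    using assms(1) unfolding acyclic_wfsa_def by blast
  show "{(ts, f). f \<in> F \<and> is_path delta q ts f} \<subseteq> {ts. set ts \<subseteq> delta \<and> distinct ts} \<times> F"
    using is_path_ranked[OF rank] by blast
  show "finite ({ts. set ts \<subseteq> delta \<and> distinct ts} \<times> F)"
    using assms(2,3) finite_subset_distinct by blast
qed

theorem theorem2:
  fixes le :: "'k \<Rightarrow> 'k \<Rightarrow> bool"
    and add mul :: "'k \<Rightarrow> 'k \<Rightarrow> 'k"
    and zr un :: 'k
    and Q :: "'q set" and s :: 'q and Sig :: "'z set"
    and omega :: "'q \<Rightarrow> 'k" and delta :: "('q \<times> 'z \<times> 'k \<times> 'q) set"
  assumes "monotonic_semiring le add mul zr un"
    and "negative_semiring le zr un"
    and "is_wfsa Q s Sig omega delta"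
    and "acyclic_wfsa Q delta"
  shows "\<forall>q z k r. (q, z, k, r) \<in> delta \<longrightarrow>
           le (backward_distance add mul zr Q omega delta q)
              (mul k (backward_distance add mul zr Q omega delta r))"
proof (intro allI impI)
  fix q z k r
  assume tr: "(q, z, k, r) \<in> delta"
  have sr: "is_semiring add mul zr un"
    using assms(1) unfolding monotonic_semiring_def by blast
  define P where "P x = {(ts, f). f \<in> final_states Q omega zr \<and> is_path delta x ts f}" for x
  define g where "g = (\<lambda>(ts :: ('q \<times> 'z \<times> 'k \<times> 'q) list, f). path_weight mul ts (omega f))"
  define extend where "extend = (\<lambda>(ts, f :: 'q). ((q, z, k, r) # ts, f))"
  have dist: "backward_distance add mul zr Q omega delta x = ssum add zr g (P x)" for x
    unfolding backward_distance_def P_def g_def ..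
  have "finite (final_states Q omega zr)" and "finite delta"
    using assms(3) unfolding is_wfsa_def final_states_def by auto
  then have "finite (P q)"
    unfolding P_def using finite_paths_acyclic[OF assms(4)] by blast
  moreover have "extend ` P r \<subseteq> P q"
    using tr unfolding extend_def P_def by auto
  ultimately have "le (ssum add zr g (P q)) (ssum add zr g (extend ` P r))"
    using ssum_superset_le[OF assms(1,2)] by blast
  also have "ssum add zr g (extend ` P r) = ssum add zr (g \<circ> extend) (P r)"
    by (rule ssum_reindex[OF sr]) (auto simp: inj_on_def extend_def)
  also have "g \<circ> extend = (\<lambda>x. mul k (g x))"
    unfolding g_def extend_def path_weight_def by (auto simp: fun_eq_iff)
  also have "ssum add zr (\<lambda>x. mul k (g x)) (P r) = mul k (ssum add zr g (P r))"
    by (rule ssum_mult_left[OF sr])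
  finally show "le (backward_distance add mul zr Q omega delta q)
                   (mul k (backward_distance add mul zr Q omega delta r))"
    by (simp add: dist)
qed

end
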